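(* Let $W$ be a weight matrix of size $N$ on $(a,b)$ and let $\{F_n\}_{n\ge0}$ be a sequence of matrix orthogonal functions with respect to $W$ satisfying a three term recursion $xF_n=A_nF_{n-1}+B_nF_n+C_nF_{n+1}$ ($n\ge0$) with constant matrices, $A_0=0$ and all $C_n$ nonsingular. Assume $F_0$ is $C^\infty$ on $(a,b)$. Let $D=\sum_{i=0}^s\partial^iG_i(x)$ be a right-hand side linear ordinary differential operator with matrix valued coefficients on $(a,b)$ such that $F_nD=\Lambda_nF_n$ for all $n\ge0$, with $\Lambda_n\in M_N(\mathbb C)$. Let $Q_n$ be the matrix polynomials with $F_n=Q_nF_0$ and let $\tilde D=F_0DF_0^{-1}$. Then $Q_n\tilde D=\Lambda_nQ_n$ for all $n\ge0$, and $\tilde D\in\mathcal D(F_0WF_0^* )$; in particular $\tilde D$ is hypergeometric.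
   Context: $\partial=d/dx$. A right-hand side differential operator $D=\sum_{i=0}^s\partial^iG_i(x)$ acts on a matrix function $Q$ by $QD=\sum_{i=0}^s\partial^i(Q)(x)G_i(x)$. The operator $\tilde D=F_0DF_0^{-1}$ is the operator $Q\mapsto\big((QF_0)D\big)F_0^{-1}$ (defined where $F_0$ is invertible); it is again a right-hand side differential operator with matrix coefficients. For a weight matrix $W'$ with a sequence of matrix orthogonal polynomials $\{P_n\}_{n\ge0}$ (degree $n$, nonsingular leading coefficient, mutually orthogonal for $(P,Q)=\int_a^bPW'Q^*dx$), $\mathcal D(W')$ is the algebra of all right-hand side differential operators $D$ with matrix valued coefficients such that $P_nD=\Gamma_n(D)P_n$ with $\Gamma_n(D)\in M_N(\mathbb C)$ for all $n\ge0$ (this does not depend on the chosen sequence). An operator is hypergeometric if the coefficient of its $j$th-order term is a matrix polynomial of degree at most $j$. Weight matrices and sequences of matrix orthogonal functions: $W$ integrable on $(a,b)$, $W(x)$ self-adjoint positive semidefinite, positive definite a.e.; $\{F_n\}$ are $M_N(\mathbb C)$-valued functions with $\det F_0\ne0$ a.e., $F_iWF_j^*$ integrable, and $\int_a^bF_iWF_j^*dx=0$ for $i\neq j$. *)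

theory Defs
  imports "HOL-Analysis.Analysis"
begin

type_synonym 'n cmat = "complex^'n^'n"

definition mat_adj :: "'n::finite cmat \<Rightarrow> 'n cmat" where
  "mat_adj M = (\<chi> i j. cnj (M $ j $ i))"

definition qform :: "'n::finite cmat \<Rightarrow> complex^'n \<Rightarrow> complex" where
  "qform M v = (\<Sum>i\<in>UNIV. cnj (v $ i) * (M *v v) $ i)"

definition hermitian :: "'n::finite cmat \<Rightarrow> bool" where
  "hermitian M \<longleftrightarrow> mat_adj M = M"

definition psd :: "'n::finite cmat \<Rightarrow> bool" where
  "psd M \<longleftrightarrow> (\<forall>v. Im (qform M v) = 0 \<and> 0 \<le> Re (qform M v))"

definition pd :: "'n::finite cmat \<Rightarrow> bool" where
  "pd M \<longleftrightarrow> (\<forall>v. v \<noteq> 0 \<longrightarrow> Im (qform M v) = 0 \<and> 0 < Re (qform M v))"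

definition weight_matrix :: "real set \<Rightarrow> (real \<Rightarrow> 'n::finite cmat) \<Rightarrow> bool" where
  "weight_matrix S W \<longleftrightarrow>
     set_integrable lborel S W \<and>
     (\<forall>x\<in>S. hermitian (W x) \<and> psd (W x)) \<and>
     (AE x in lborel. x \<in> S \<longrightarrow> pd (W x))"

definition mof_seq :: "real set \<Rightarrow> (real \<Rightarrow> 'n::finite cmat) \<Rightarrow> (nat \<Rightarrow> real \<Rightarrow> 'n cmat) \<Rightarrow> bool" where
  "mof_seq S W F \<longleftrightarrow>
     (AE x in lborel. x \<in> S \<longrightarrow> det (F 0 x) \<noteq> 0) \<and>
     (\<forall>i j. set_integrable lborel S (\<lambda>x. F i x ** W x ** mat_adj (F j x))) \<and>
     (\<forall>i j. i \<noteq> j \<longrightarrow> (LINT x:S|lborel. F i x ** W x ** mat_adj (F j x)) = 0)"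

definition vderiv :: "(real \<Rightarrow> 'a::real_normed_vector) \<Rightarrow> real \<Rightarrow> 'a" where
  "vderiv f = (\<lambda>x. vector_derivative f (at x))"

definition vderivs :: "nat \<Rightarrow> (real \<Rightarrow> 'a::real_normed_vector) \<Rightarrow> real \<Rightarrow> 'a" where
  "vderivs k f = (vderiv ^^ k) f"

definition smooth_on :: "real set \<Rightarrow> (real \<Rightarrow> 'a::real_normed_vector) \<Rightarrow> bool" where
  "smooth_on S f \<longleftrightarrow>
     (\<forall>k. \<forall>x\<in>S. (vderivs k f has_vector_derivative vderivs (Suc k) f x) (at x))"

text \<open>Right-hand side differential operator D = sum_{i=0}^s d^i G_i acting on Q:
  Q D = sum_{i=0}^s (d^i Q) G_i.\<close>
definition dop :: "nat \<Rightarrow> (nat \<Rightarrow> real \<Rightarrow> 'n::finite cmat) \<Rightarrow> (real \<Rightarrow> 'n cmat) \<Rightarrow> real \<Rightarrow> 'n cmat" where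
  "dop s G Q x = (\<Sum>i\<le>s. vderivs i Q x ** G i x)"

definition tilde_op :: "nat \<Rightarrow> (nat \<Rightarrow> real \<Rightarrow> 'n::finite cmat) \<Rightarrow> (real \<Rightarrow> 'n cmat)
    \<Rightarrow> (real \<Rightarrow> 'n cmat) \<Rightarrow> real \<Rightarrow> 'n cmat" where
  "tilde_op s G F0 Q x = dop s G (\<lambda>y. Q y ** F0 y) x ** matrix_inv (F0 x)"

definition mpoly_le :: "nat \<Rightarrow> (real \<Rightarrow> 'n::finite cmat) \<Rightarrow> bool" where
  "mpoly_le k P \<longleftrightarrow> (\<exists>c. \<forall>x. P x = (\<Sum>j\<le>k. x ^ j *\<^sub>R c j))"

definition mpoly_deg :: "nat \<Rightarrow> (real \<Rightarrow> 'n::finite cmat) \<Rightarrow> bool" where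
  "mpoly_deg n P \<longleftrightarrow> (\<exists>c. invertible (c n) \<and> (\<forall>x. P x = (\<Sum>j\<le>n. x ^ j *\<^sub>R c j)))"

definition mop_seq :: "real set \<Rightarrow> (real \<Rightarrow> 'n::finite cmat) \<Rightarrow> (nat \<Rightarrow> real \<Rightarrow> 'n cmat) \<Rightarrow> bool" where
  "mop_seq S W P \<longleftrightarrow>
     (\<forall>n. mpoly_deg n (P n)) \<and>
     (\<forall>i j. set_integrable lborel S (\<lambda>x. P i x ** W x ** mat_adj (P j x))) \<and>
     (\<forall>i j. i \<noteq> j \<longrightarrow> (LINT x:S|lborel. P i x ** W x ** mat_adj (P j x)) = 0)"

definition in_DW :: "real set \<Rightarrow> (real \<Rightarrow> 'n::finite cmat) \<Rightarrow> nat \<Rightarrow> (nat \<Rightarrow> real \<Rightarrow> 'n cmat) \<Rightarrow> bool" where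
  "in_DW S W s G \<longleftrightarrow>
     (\<exists>P. mop_seq S W P \<and> (\<forall>n. \<exists>\<Gamma>. \<forall>x\<in>S. dop s G (P n) x = \<Gamma> ** P n x))"

definition hypergeometric :: "real set \<Rightarrow> nat \<Rightarrow> (nat \<Rightarrow> real \<Rightarrow> 'n::finite cmat) \<Rightarrow> bool" where
  "hypergeometric S s G \<longleftrightarrow>
     (\<forall>j\<le>s. \<exists>c. \<forall>x\<in>S. G j x = (\<Sum>k\<le>j. x ^ k *\<^sub>R c k))"

end

theory Submission
  imports Defs
begin

text \<open>Solving the three term recursion for \<open>F\<^sub>n\<^sub>+\<^sub>1\<close> gives \<open>F\<^sub>n = Q\<^sub>n F\<^sub>0\<close> with \<open>Q\<^sub>n\<close> a matrix
  polynomial of degree \<open>n\<close> with invertible leading coefficient. By Leibniz's rule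
  \<open>F\<^sub>0 D F\<^sub>0\<^sup>-\<^sup>1 = \<Sum>\<^sub>k \<partial>\<^sup>k H\<^sub>k\<close> with \<open>H\<^sub>k = \<Sum>\<^sub>i (i choose k) \<partial>\<^sup>i\<^sup>-\<^sup>k F\<^sub>0 G\<^sub>i F\<^sub>0\<^sup>-\<^sup>1\<close>
  wherever \<open>F\<^sub>0\<close> is invertible, and there \<open>Q\<^sub>n\<close> is an eigenfunction with eigenvalue \<open>\<Lambda>\<^sub>n\<close>.
  For \<open>n = 0, \<dots>, s\<close> these eigenvalue equations form a triangular system for the \<open>H\<^sub>k\<close>
  whose diagonal entries \<open>\<partial>\<^sup>k Q\<^sub>k\<close> are constant invertible matrices, so \<open>H\<^sub>k\<close> agrees with
  a polynomial of degree at most \<open>k\<close>. As \<open>F\<^sub>0\<close> is invertible almost everywhere, hence on a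
  dense subset of the interval, the eigenvalue equations of the operator with these polynomial
  coefficients, being polynomial identities, hold on all of it; and orthogonality of the \<open>F\<^sub>n\<close> for \<open>W\<close> is orthogonality of the \<open>Q\<^sub>n\<close> for
  \<open>F\<^sub>0 W F\<^sub>0\<^sup>*\<close>.\<close>

section \<open>Matrix algebra\<close>

lemma matrix_add_rdistrib: "(A + B) ** C = A ** C + B ** C"
  by (vector matrix_matrix_mult_def sum.distrib[symmetric] field_simps)

lemma bounded_bilinear_matrix_mult:
  "bounded_bilinear ((**) :: complex^'n::finite^'m::finite \<Rightarrow> complex^'p::finite^'n \<Rightarrow> complex^'p^'m)"
proof -
  have "bilinear ((**) :: complex^'n^'m \<Rightarrow> complex^'p^'n \<Rightarrow> complex^'p^'m)"
    unfolding bilinear_def linear_iff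
    by (auto simp: matrix_add_ldistrib matrix_add_rdistrib matrix_scalar_ac
        scalar_matrix_assoc[symmetric])
  then show ?thesis using bilinear_conv_bounded_bilinear by blast
qed

lemmas matrix_mult_diff_left = bounded_bilinear.diff_left[OF bounded_bilinear_matrix_mult]
  and matrix_mult_sum_left = bounded_bilinear.sum_left[OF bounded_bilinear_matrix_mult]
  and matrix_mult_sum_right = bounded_bilinear.sum_right[OF bounded_bilinear_matrix_mult]
  and matrix_mult_scaleR_left = bounded_bilinear.scaleR_left[OF bounded_bilinear_matrix_mult]
  and matrix_mult_scaleR_right = bounded_bilinear.scaleR_right[OF bounded_bilinear_matrix_mult]

lemma matrix_inv_right: "invertible A \<Longrightarrow> A ** matrix_inv A = mat 1"
  and matrix_inv_left: "invertible A \<Longrightarrow> matrix_inv A ** A = mat 1"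
  using someI_ex[of "\<lambda>A'. A ** A' = mat 1 \<and> A' ** A = mat 1"]
  unfolding invertible_def matrix_inv_def by auto

lemma invertible_matrix_inv: "invertible A \<Longrightarrow> invertible (matrix_inv A)"
  using matrix_inv_left matrix_inv_right unfolding invertible_def by blast

lemma mat_adj_mult: "mat_adj (A ** B) = mat_adj B ** mat_adj A"
  unfolding mat_adj_def matrix_matrix_mult_def by (simp add: vec_eq_iff mult.commute)

lemma mat_adj_mat_adj [simp]: "mat_adj (mat_adj A) = A"
  unfolding mat_adj_def by (simp add: vec_eq_iff)

lemma invertible_mat_adj: "invertible A \<Longrightarrow> invertible (mat_adj A)"
  unfolding invertible_def by (metis mat_adj_mult mat_adj_mat_adj matrix_mul_lid matrix_mul_rid)

lemma qform_congruence:
  fixes M W :: "'n::finite cmat"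
  shows "qform (M ** W ** mat_adj M) v = qform W (mat_adj M *v v)"
proof -
  have adjoint: "(\<Sum>i\<in>UNIV. cnj (v $ i) * (M *v y) $ i) = (\<Sum>j\<in>UNIV. cnj ((mat_adj M *v v) $ j) * y $ j)"
    for M :: "'n cmat" and y
  proof -
    have "(\<Sum>i\<in>UNIV. cnj (v $ i) * (M *v y) $ i)
        = (\<Sum>i\<in>UNIV. \<Sum>j\<in>UNIV. cnj (v $ i) * (M $ i $ j * y $ j))"
      unfolding matrix_vector_mult_def by (simp add: sum_distrib_left)
    also have "\<dots> = (\<Sum>j\<in>UNIV. \<Sum>i\<in>UNIV. cnj (v $ i) * (M $ i $ j * y $ j))"
      by (rule sum.swap)
    also have "\<dots> = (\<Sum>j\<in>UNIV. cnj ((mat_adj M *v v) $ j) * y $ j)"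
      unfolding matrix_vector_mult_def mat_adj_def by (simp add: sum_distrib_left sum_distrib_right mult_ac)
    finally show ?thesis .
  qed
  show ?thesis
    unfolding qform_def by (simp add: matrix_vector_mul_assoc[symmetric] adjoint)
qed

section \<open>Matrix polynomials\<close>

definition mpoly :: "nat \<Rightarrow> (nat \<Rightarrow> 'a::real_normed_vector) \<Rightarrow> real \<Rightarrow> 'a" where
  "mpoly k c x = (\<Sum>j\<le>k. x ^ j *\<^sub>R c j)"

lemma mpoly_le_iff: "mpoly_le k P \<longleftrightarrow> (\<exists>c. P = mpoly k c)"
  unfolding mpoly_le_def mpoly_def by (auto simp: fun_eq_iff)

lemma mpoly_0 [simp]: "mpoly 0 c = (\<lambda>x. c 0)"
  by (simp add: mpoly_def fun_eq_iff)

lemma mpoly_Suc_shift: "mpoly (Suc k) c x = c 0 + x *\<^sub>R mpoly k (\<lambda>j. c (Suc j)) x"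
  unfolding mpoly_def by (subst sum.atMost_Suc_shift) (simp add: scaleR_sum_right)

lemma mpoly_extend: "k \<le> m \<Longrightarrow> mpoly m (\<lambda>j. if j \<le> k then c j else 0) = mpoly k c"
  unfolding mpoly_def fun_eq_iff by (auto intro!: sum.mono_neutral_cong_right split: if_splits)

lemma continuous_on_mpoly: "continuous_on UNIV (mpoly k c)"
  unfolding mpoly_def by (intro continuous_intros)

lemma has_vector_derivative_mpoly_Suc:
  "(mpoly (Suc k) c has_vector_derivative mpoly k (\<lambda>j. real (Suc j) *\<^sub>R c (Suc j)) x) (at x)"
proof -
  have "(mpoly (Suc k) c has_vector_derivative (\<Sum>j\<le>Suc k. (real j * x ^ (j - 1)) *\<^sub>R c j)) (at x)"
    unfolding mpoly_def by (rule has_vector_derivative_sum) (auto intro!: derivative_eq_intros)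
  also have "(\<Sum>j\<le>Suc k. (real j * x ^ (j - 1)) *\<^sub>R c j) = mpoly k (\<lambda>j. real (Suc j) *\<^sub>R c (Suc j)) x"
    unfolding mpoly_def by (subst sum.atMost_Suc_shift) (simp add: algebra_simps)
  finally show ?thesis .
qed

lemma vderiv_mpoly_Suc: "vderiv (mpoly (Suc k) c) = mpoly k (\<lambda>j. real (Suc j) *\<^sub>R c (Suc j))"
  unfolding vderiv_def using has_vector_derivative_mpoly_Suc[THEN vector_derivative_at]
  by (auto simp: fun_eq_iff)

lemma vderiv_const: "vderiv (\<lambda>x. c) = (\<lambda>x. 0)"
  unfolding vderiv_def using vector_derivative_at[OF has_vector_derivative_const]
  by (auto simp: fun_eq_iff)

lemma vderivs_0 [simp]: "vderivs 0 f = f"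
  unfolding vderivs_def by simp

lemma vderivs_Suc: "vderivs (Suc i) f = vderiv (vderivs i f)"
  unfolding vderivs_def by simp

lemma vderivs_Suc_right: "vderivs (Suc i) f = vderivs i (vderiv f)"
  unfolding vderivs_def by (simp add: funpow_Suc_right del: funpow.simps)

lemma vderivs_const_0: "vderivs i (\<lambda>x. 0) = (\<lambda>x. 0)"
  by (induction i) (auto simp: vderivs_Suc vderiv_const)

lemma vderivs_mpoly:
  "vderivs i (mpoly k c) =
     (if i \<le> k then mpoly (k - i) (\<lambda>j. (fact (j + i) / fact j) *\<^sub>R c (j + i)) else (\<lambda>x. 0))"
proof (induction i arbitrary: k c)
  case 0
  then show ?case by simp
next
  case (Suc i)
  show ?case
  proof (cases k)
    case 0
    then show ?thesis by (simp add: vderivs_Suc_right vderiv_const vderivs_const_0)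
  next
    case (Suc k')
    then have "vderivs (Suc i) (mpoly k c) = vderivs i (mpoly k' (\<lambda>j. real (Suc j) *\<^sub>R c (Suc j)))"
      by (simp add: vderivs_Suc_right vderiv_mpoly_Suc)
    then show ?thesis
      unfolding Suc.IH using Suc
      by (auto intro!: arg_cong[where f="mpoly _"] arg_cong2[where f=scaleR]
          simp: fun_eq_iff scaleR_scaleR mult.commute)
  qed
qed

lemma has_vector_derivative_vderivs_mpoly:
  "(vderivs i (mpoly k c) has_vector_derivative vderivs (Suc i) (mpoly k c) x) (at x)"
proof -
  have "(mpoly m d has_vector_derivative vderiv (mpoly m d) x) (at x)" for m and d :: "nat \<Rightarrow> 'a"
    by (cases m) (simp add: vderiv_const, metis has_vector_derivative_mpoly_Suc vderiv_mpoly_Suc)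
  then show ?thesis
    unfolding vderivs_Suc by (auto simp: vderivs_mpoly vderiv_const)
qed

lemma mpoly_le_mono: "mpoly_le k P \<Longrightarrow> k \<le> m \<Longrightarrow> mpoly_le m P"
  unfolding mpoly_le_iff by (metis mpoly_extend)

lemma mpoly_le_zero: "mpoly_le k (\<lambda>x. 0)"
  unfolding mpoly_le_def by (rule exI[of _ "\<lambda>_. 0"]) simp

lemma mpoly_le_add: "mpoly_le k P \<Longrightarrow> mpoly_le k R \<Longrightarrow> mpoly_le k (\<lambda>x. P x + R x)"
proof -
  assume "mpoly_le k P" "mpoly_le k R"
  then obtain c d where "P = mpoly k c" "R = mpoly k d" unfolding mpoly_le_iff by blast
  then have "(\<lambda>x. P x + R x) = mpoly k (\<lambda>j. c j + d j)"
    by (simp add: mpoly_def fun_eq_iff scaleR_add_right sum.distrib)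
  then show ?thesis unfolding mpoly_le_iff by blast
qed

lemma mpoly_le_uminus: "mpoly_le k P \<Longrightarrow> mpoly_le k (\<lambda>x. - P x)"
proof -
  assume "mpoly_le k P"
  then obtain c where "P = mpoly k c" unfolding mpoly_le_iff by blast
  then have "(\<lambda>x. - P x) = mpoly k (\<lambda>j. - c j)" by (simp add: mpoly_def fun_eq_iff sum_negf)
  then show ?thesis unfolding mpoly_le_iff by blast
qed

lemma mpoly_le_diff: "mpoly_le k P \<Longrightarrow> mpoly_le k R \<Longrightarrow> mpoly_le k (\<lambda>x. P x - R x)"
  using mpoly_le_add[of k P "\<lambda>x. - R x"] mpoly_le_uminus by auto

lemma mpoly_le_sum:
  "finite I \<Longrightarrow> (\<And>i. i \<in> I \<Longrightarrow> mpoly_le k (f i)) \<Longrightarrow> mpoly_le k (\<lambda>x. \<Sum>i\<in>I. f i x)"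
  by (induction I rule: finite_induct) (auto intro: mpoly_le_add mpoly_le_zero)

lemma mpoly_le_lmult: "mpoly_le k P \<Longrightarrow> mpoly_le k (\<lambda>x. M ** P x)"
proof -
  assume "mpoly_le k P"
  then obtain c where "P = mpoly k c" unfolding mpoly_le_iff by blast
  then have "(\<lambda>x. M ** P x) = mpoly k (\<lambda>j. M ** c j)"
    by (simp add: mpoly_def fun_eq_iff matrix_mult_sum_right matrix_mult_scaleR_right)
  then show ?thesis unfolding mpoly_le_iff by blast
qed

lemma mpoly_le_rmult: "mpoly_le k P \<Longrightarrow> mpoly_le k (\<lambda>x. P x ** M)"
proof -
  assume "mpoly_le k P"
  then obtain c where "P = mpoly k c" unfolding mpoly_le_iff by blast
  then have "(\<lambda>x. P x ** M) = mpoly k (\<lambda>j. c j ** M)"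
    by (simp add: mpoly_def fun_eq_iff matrix_mult_sum_left matrix_mult_scaleR_left)
  then show ?thesis unfolding mpoly_le_iff by blast
qed

lemma mpoly_le_xmult: "mpoly_le k P \<Longrightarrow> mpoly_le (Suc k) (\<lambda>x. x *\<^sub>R P x)"
proof -
  assume "mpoly_le k P"
  then obtain c where "P = mpoly k c" unfolding mpoly_le_iff by blast
  then have "(\<lambda>x. x *\<^sub>R P x) = mpoly (Suc k) (\<lambda>j. if j = 0 then 0 else c (j - 1))"
    by (simp add: fun_eq_iff mpoly_Suc_shift)
  then show ?thesis unfolding mpoly_le_iff by blast
qed

lemma mpoly_le_mult: "mpoly_le a P \<Longrightarrow> mpoly_le b R \<Longrightarrow> mpoly_le (a + b) (\<lambda>x. P x ** R x)"
proof (induction b arbitrary: R)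
  case 0
  then obtain c where "R = mpoly 0 c" unfolding mpoly_le_iff by blast
  then show ?case using mpoly_le_rmult[OF "0.prems"(1)] by simp
next
  case (Suc b)
  then obtain d where d: "R = mpoly (Suc b) d" unfolding mpoly_le_iff by blast
  have "mpoly_le b (mpoly b (\<lambda>j. d (Suc j)))" unfolding mpoly_le_iff by blast
  from mpoly_le_xmult[OF Suc.IH[OF Suc.prems(1) this]]
  have "mpoly_le (Suc (a + b)) (\<lambda>x. x *\<^sub>R (P x ** mpoly b (\<lambda>j. d (Suc j)) x))" .
  moreover have "mpoly_le (a + Suc b) (\<lambda>x. P x ** d 0)"
    using mpoly_le_rmult[OF Suc.prems(1)] mpoly_le_mono le_add1 by blast
  moreover have "(\<lambda>x. P x ** R x) = (\<lambda>x. P x ** d 0 + x *\<^sub>R (P x ** mpoly b (\<lambda>j. d (Suc j)) x))"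
    unfolding d mpoly_Suc_shift by (simp add: matrix_add_ldistrib matrix_mult_scaleR_right)
  ultimately show ?case using mpoly_le_add by simp
qed

lemma continuous_on_mpoly_le: "mpoly_le k P \<Longrightarrow> continuous_on UNIV P"
  unfolding mpoly_le_iff using continuous_on_mpoly by blast

lemma mpoly_le_vderivs: "mpoly_le k P \<Longrightarrow> mpoly_le (k - i) (vderivs i P)"
  unfolding mpoly_le_iff by (auto simp: vderivs_mpoly intro: exI[of _ "\<lambda>_. 0"])

lemma vderivs_mpoly_le_eq_0: "mpoly_le k P \<Longrightarrow> k < i \<Longrightarrow> vderivs i P x = 0"
  unfolding mpoly_le_iff by (auto simp: vderivs_mpoly)

lemma smooth_on_mpoly_le: "mpoly_le k P \<Longrightarrow> smooth_on S P"
  unfolding smooth_on_def mpoly_le_iff using has_vector_derivative_vderivs_mpoly by blast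

lemma mpoly_deg_imp_mpoly_le: "mpoly_deg k P \<Longrightarrow> mpoly_le k P"
  unfolding mpoly_deg_def mpoly_le_def by blast

lemma vderivs_mpoly_deg_top: "mpoly_deg k P \<Longrightarrow> \<exists>M. invertible M \<and> vderivs k P = (\<lambda>x. M)"
proof -
  assume "mpoly_deg k P"
  then obtain c where c: "invertible (c k)" "P = mpoly k c"
    unfolding mpoly_deg_def mpoly_def by (auto simp: fun_eq_iff)
  then have "vderivs k P = (\<lambda>x. fact k *\<^sub>R c k)" by (simp add: vderivs_mpoly)
  moreover have "invertible (fact k *\<^sub>R c k)" using c by (intro scalar_invertible) auto
  ultimately show ?thesis by blast
qed

lemma mpoly_deg_0_mat_1: "mpoly_deg 0 (\<lambda>x. mat 1)"
  unfolding mpoly_deg_def by (rule exI[of _ "\<lambda>_. mat 1"]) (simp add: invertible_def)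

lemma mpoly_deg_lmult: "invertible M \<Longrightarrow> mpoly_deg k P \<Longrightarrow> mpoly_deg k (\<lambda>x. M ** P x)"
proof -
  assume M: "invertible M" and "mpoly_deg k P"
  then obtain c where c: "invertible (c k)" "\<forall>x. P x = (\<Sum>j\<le>k. x ^ j *\<^sub>R c j)"
    unfolding mpoly_deg_def by blast
  then have "\<forall>x. M ** P x = (\<Sum>j\<le>k. x ^ j *\<^sub>R (M ** c j))"
    by (simp add: matrix_mult_sum_right matrix_mult_scaleR_right)
  then show ?thesis
    unfolding mpoly_deg_def using invertible_mult[OF M c(1)] by (intro exI[of _ "\<lambda>j. M ** c j"]) auto
qed

lemma mpoly_deg_Suc: "mpoly_deg n P \<Longrightarrow> mpoly_le n R \<Longrightarrow> mpoly_deg (Suc n) (\<lambda>x. x *\<^sub>R P x + R x)"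
proof -
  assume "mpoly_deg n P" "mpoly_le n R"
  then obtain c d where c: "invertible (c n)" "P = mpoly n c" and d: "R = mpoly n d"
    unfolding mpoly_deg_def mpoly_le_iff mpoly_def by (auto simp: fun_eq_iff)
  define e where "e j = (if j = 0 then 0 else c (j - 1)) + (if j \<le> n then d j else 0)" for j
  have "mpoly (Suc n) e x = x *\<^sub>R P x + R x" for x
  proof -
    have "mpoly (Suc n) e x = mpoly (Suc n) (\<lambda>j. if j = 0 then 0 else c (j - 1)) x
        + mpoly (Suc n) (\<lambda>j. if j \<le> n then d j else 0) x"
      unfolding mpoly_def e_def by (simp add: scaleR_add_right sum.distrib)
    then show ?thesis
      unfolding c d mpoly_Suc_shift[of n "\<lambda>j. if j = 0 then 0 else c (j - 1)"]
        mpoly_extend[OF le_SucI[OF order_refl]]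
      by simp
  qed
  moreover have "e (Suc n) = c n" unfolding e_def by simp
  ultimately show ?thesis
    unfolding mpoly_deg_def mpoly_def using c(1) by (intro exI[of _ e]) auto
qed

section \<open>Higher derivatives of products\<close>

lemma vderivs_cong_open:
  assumes "open S" "\<And>y. y \<in> S \<Longrightarrow> f y = g y" "x \<in> S"
  shows "vderivs k f x = vderivs k g x"
  using assms(3)
proof (induction k arbitrary: x)
  case 0
  then show ?case using assms(2) by simp
next
  case (Suc k)
  have "(vderivs k f has_vector_derivative f') (at x) \<longleftrightarrow> (vderivs k g has_vector_derivative f') (at x)"
    for f'
    using has_vector_derivative_transform_within_open[OF _ assms(1) Suc.prems] Suc.IH by metis
  then show ?case unfolding vderivs_Suc vderiv_def vector_derivative_def by simp
qed

lemma sum_choose_Suc_scaleR: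
  fixes f :: "nat \<Rightarrow> 'a::real_vector"
  shows "(\<Sum>k\<le>Suc n. real (Suc n choose k) *\<^sub>R f k)
       = (\<Sum>k\<le>n. real (n choose k) *\<^sub>R f (Suc k)) + (\<Sum>k\<le>n. real (n choose k) *\<^sub>R f k)"
proof -
  have "(\<Sum>k\<le>Suc n. real (Suc n choose k) *\<^sub>R f k)
      = f 0 + (\<Sum>k\<le>n. real (Suc n choose Suc k) *\<^sub>R f (Suc k))"
    by (subst sum.atMost_Suc_shift) simp
  also have "\<dots> = (\<Sum>k\<le>n. real (n choose k) *\<^sub>R f (Suc k))
      + (f 0 + (\<Sum>k\<le>n. real (n choose Suc k) *\<^sub>R f (Suc k)))"
    by (simp only: binomial_Suc_Suc of_nat_add scaleR_add_left sum.distrib) (simp add: algebra_simps)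
  also have "f 0 + (\<Sum>k\<le>n. real (n choose Suc k) *\<^sub>R f (Suc k)) = (\<Sum>k\<le>Suc n. real (n choose k) *\<^sub>R f k)"
    by (subst sum.atMost_Suc_shift) simp
  also have "\<dots> = (\<Sum>k\<le>n. real (n choose k) *\<^sub>R f k)"
    by (simp only: sum.atMost_Suc binomial_eq_0[of n "Suc n"] lessI) simp
  finally show ?thesis .
qed

lemma vderivs_mult_Leibniz:
  fixes R F :: "real \<Rightarrow> 'n::finite cmat"
  assumes S: "open S" and R: "smooth_on S R" and F: "smooth_on S F" and "x \<in> S"
  shows "vderivs n (\<lambda>y. R y ** F y) x
     = (\<Sum>k\<le>n. real (n choose k) *\<^sub>R (vderivs k R x ** vderivs (n - k) F x))"
  using \<open>x \<in> S\<close>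
proof (induction n arbitrary: x)
  case 0
  then show ?case by simp
next
  case (Suc n)
  define L where "L y = (\<Sum>k\<le>n. real (n choose k) *\<^sub>R (vderivs k R y ** vderivs (n - k) F y))" for y
  have "((\<lambda>y. vderivs k R y ** vderivs (n - k) F y) has_vector_derivative
      vderivs k R x ** vderivs (Suc (n - k)) F x + vderivs (Suc k) R x ** vderivs (n - k) F x) (at x)"
    for k
    using R F Suc.prems unfolding smooth_on_def by (blast intro: bounded_bilinear.has_vector_derivative[OF bounded_bilinear_matrix_mult])
  then have "(L has_vector_derivative (\<Sum>k\<le>n. real (n choose k) *\<^sub>R
      (vderivs k R x ** vderivs (Suc (n - k)) F x + vderivs (Suc k) R x ** vderivs (n - k) F x))) (at x)"
    unfolding L_def
    by (intro has_vector_derivative_sum bounded_linear.has_vector_derivative[OF bounded_linear_scaleR_right])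
  also have "(\<Sum>k\<le>n. real (n choose k) *\<^sub>R
      (vderivs k R x ** vderivs (Suc (n - k)) F x + vderivs (Suc k) R x ** vderivs (n - k) F x))
     = (\<Sum>k\<le>n. real (n choose k) *\<^sub>R
      (vderivs k R x ** vderivs (Suc n - k) F x + vderivs (Suc k) R x ** vderivs (n - k) F x))"
    by (intro sum.cong refl) (simp add: Suc_diff_le)
  also have "(\<Sum>k\<le>n. real (n choose k) *\<^sub>R
      (vderivs k R x ** vderivs (Suc n - k) F x + vderivs (Suc k) R x ** vderivs (n - k) F x))
     = (\<Sum>k\<le>Suc n. real (Suc n choose k) *\<^sub>R (vderivs k R x ** vderivs (Suc n - k) F x))"
    unfolding sum_choose_Suc_scaleR[where f="\<lambda>k. vderivs k R x ** vderivs (Suc n - k) F x"]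
    by (simp only: scaleR_add_right sum.distrib diff_Suc_Suc add.commute)
  finally have "(vderivs n (\<lambda>y. R y ** F y) has_vector_derivative
      (\<Sum>k\<le>Suc n. real (Suc n choose k) *\<^sub>R (vderivs k R x ** vderivs (Suc n - k) F x))) (at x)"
    by (rule has_vector_derivative_transform_within_open[OF _ S Suc.prems]) (simp add: L_def Suc.IH)
  then show ?case unfolding vderivs_Suc vderiv_def by (rule vector_derivative_at)
qed

section \<open>Weights, orthogonality and the recursion\<close>

lemma open_subset_closure_AE:
  fixes S :: "real set"
  assumes S: "open S" and ae: "AE x in lborel. x \<in> S \<longrightarrow> P x"
  shows "S \<subseteq> closure {x \<in> S. P x}"
proof
  fix x assume x: "x \<in> S"
  show "x \<in> closure {x \<in> S. P x}"
  proof (rule ccontr)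
    assume "x \<notin> closure {x \<in> S. P x}"
    then obtain e where e: "e > 0" "\<forall>y\<in>{y \<in> S. P y}. \<not> dist y x < e"
      unfolding closure_approachable by auto
    obtain e' where e': "e' > 0" "ball x e' \<subseteq> S" using S x open_contains_ball by blast
    define d where "d = min e e'"
    have d: "d > 0" using e e' by (simp add: d_def)
    have outside: "y \<in> S \<and> \<not> P y" if "y \<in> ball x d" for y
    proof -
      have "y \<in> S" using that e'(2) by (auto simp: d_def)
      moreover have "dist y x < e" using that by (simp add: d_def dist_commute)
      ultimately show ?thesis using e(2) by blast
    qed
    have "AE y in lborel. y \<notin> ball x d"
      using ae by (rule AE_mp) (use outside in blast)
    then have "emeasure lborel (ball x d) = 0"
      by (subst (asm) AE_iff_measurable[of "ball x d"]) auto
    then show False using d by (simp add: ball_eq_greaterThanLessThan)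
  qed
qed

lemma hermitian_congruence: "hermitian W \<Longrightarrow> hermitian (M ** W ** mat_adj M)"
  unfolding hermitian_def by (simp add: mat_adj_mult matrix_mul_assoc)

lemma psd_congruence: "psd W \<Longrightarrow> psd (M ** W ** mat_adj M)"
  unfolding psd_def qform_congruence by blast

lemma pd_congruence:
  assumes "invertible M" "pd W"
  shows "pd (M ** W ** mat_adj M)"
  unfolding pd_def qform_congruence
proof (intro allI impI)
  fix v :: "complex^'a" assume "v \<noteq> 0"
  then have "mat_adj M *v v \<noteq> 0"
    using inj_matrix_vector_mult[OF invertible_mat_adj[OF assms(1)]] by (metis injD matrix_vector_mult_0_right)
  then show "Im (qform W (mat_adj M *v v)) = 0 \<and> 0 < Re (qform W (mat_adj M *v v))"
    using assms(2) unfolding pd_def by blast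
qed

lemma weight_matrix_congruence:
  fixes W F0 :: "real \<Rightarrow> 'n::finite cmat"
  assumes W: "weight_matrix S W"
    and F0_inv: "AE x in lborel. x \<in> S \<longrightarrow> det (F0 x) \<noteq> 0"
    and integrable: "set_integrable lborel S (\<lambda>x. F0 x ** W x ** mat_adj (F0 x))"
  shows "weight_matrix S (\<lambda>x. F0 x ** W x ** mat_adj (F0 x))"
proof -
  have "AE x in lborel. x \<in> S \<longrightarrow> pd (W x)" using W unfolding weight_matrix_def by blast
  then have "AE x in lborel. x \<in> S \<longrightarrow> pd (F0 x ** W x ** mat_adj (F0 x))"
    using F0_inv by eventually_elim (auto simp: invertible_det_nz intro: pd_congruence)
  then show ?thesis
    using W integrable unfolding weight_matrix_def by (auto intro: hermitian_congruence psd_congruence)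
qed

lemma mop_seq_of_factorization:
  assumes S: "S \<in> sets lborel" and F: "mof_seq S W F"
    and deg: "\<And>n. mpoly_deg n (Q n)"
    and factor: "\<And>n x. x \<in> S \<Longrightarrow> F n x = Q n x ** F0 x"
  shows "mop_seq S (\<lambda>x. F0 x ** W x ** mat_adj (F0 x)) Q"
proof -
  have same: "Q i x ** (F0 x ** W x ** mat_adj (F0 x)) ** mat_adj (Q j x) = F i x ** W x ** mat_adj (F j x)"
    if "x \<in> S" for i j x
    using factor[OF that] by (simp add: mat_adj_mult matrix_mul_assoc)
  show ?thesis
    unfolding mop_seq_def
  proof (intro conjI allI impI deg)
    show "set_integrable lborel S (\<lambda>x. Q i x ** (F0 x ** W x ** mat_adj (F0 x)) ** mat_adj (Q j x))"
      for i j
      using F unfolding mof_seq_def by (subst set_integrable_cong[OF refl refl same]) auto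
    show "(LINT x:S|lborel. Q i x ** (F0 x ** W x ** mat_adj (F0 x)) ** mat_adj (Q j x)) = 0"
      if "i \<noteq> j" for i j
      using F that unfolding mof_seq_def by (subst set_lebesgue_integral_cong[OF S]) (auto simp: same)
  qed
qed

fun rec_poly :: "(nat \<Rightarrow> 'n::finite cmat) \<Rightarrow> (nat \<Rightarrow> 'n cmat) \<Rightarrow> (nat \<Rightarrow> 'n cmat) \<Rightarrow> nat \<Rightarrow> real \<Rightarrow> 'n cmat"
  where
    "rec_poly A B C 0 = (\<lambda>x. mat 1)"
  | "rec_poly A B C (Suc n) = (\<lambda>x. matrix_inv (C n) **
      (x *\<^sub>R rec_poly A B C n x - A n ** rec_poly A B C (n - 1) x - B n ** rec_poly A B C n x))"

lemma rec_poly_factor: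
  fixes F :: "nat \<Rightarrow> real \<Rightarrow> 'n::finite cmat"
  assumes rec: "\<And>n x. x \<in> S \<Longrightarrow> x *\<^sub>R F n x = A n ** F (n - 1) x + B n ** F n x + C n ** F (Suc n) x"
    and C_inv: "\<And>n. invertible (C n)" and x: "x \<in> S"
  shows "F n x = rec_poly A B C n x ** F 0 x"
proof (induction n rule: less_induct)
  case (less n)
  show ?case
  proof (cases n)
    case 0
    then show ?thesis by simp
  next
    case (Suc m)
    let ?Q = "rec_poly A B C"
    have IH: "F m x = ?Q m x ** F 0 x" "F (m - 1) x = ?Q (m - 1) x ** F 0 x"
      using less[of m] less[of "m - 1"] Suc by auto
    have "F (Suc m) x = matrix_inv (C m) ** (C m ** F (Suc m) x)"
      by (simp add: matrix_mul_assoc matrix_inv_left[OF C_inv])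
    also have "C m ** F (Suc m) x = x *\<^sub>R F m x - A m ** F (m - 1) x - B m ** F m x"
      using rec[OF x, of m] by (simp add: algebra_simps)
    also have "\<dots> = (x *\<^sub>R ?Q m x - A m ** ?Q (m - 1) x - B m ** ?Q m x) ** F 0 x"
      unfolding IH matrix_mult_diff_left matrix_mult_scaleR_left matrix_mul_assoc ..
    finally show ?thesis using Suc by (simp add: matrix_mul_assoc)
  qed
qed

lemma mpoly_deg_rec_poly:
  assumes C_inv: "\<And>n. invertible (C n)"
  shows "mpoly_deg n (rec_poly A B C n)"
proof (induction n rule: less_induct)
  case (less n)
  show ?case
  proof (cases n)
    case 0
    then show ?thesis using mpoly_deg_0_mat_1 by simp
  next
    case (Suc m)
    let ?Q = "rec_poly A B C"
    have IH: "mpoly_deg m (?Q m)" "mpoly_deg (m - 1) (?Q (m - 1))"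
      using less[of m] less[of "m - 1"] Suc by auto
    have "mpoly_le m (?Q (m - 1))"
      using mpoly_le_mono[OF mpoly_deg_imp_mpoly_le[OF IH(2)]] by simp
    then have "mpoly_le m (\<lambda>x. - (A m ** ?Q (m - 1) x) - B m ** ?Q m x)"
      by (intro mpoly_le_diff mpoly_le_uminus mpoly_le_lmult mpoly_deg_imp_mpoly_le[OF IH(1)])
    from mpoly_deg_Suc[OF IH(1) this]
    have "mpoly_deg (Suc m) (\<lambda>x. x *\<^sub>R ?Q m x - A m ** ?Q (m - 1) x - B m ** ?Q m x)"
      by (simp add: algebra_simps)
    from mpoly_deg_lmult[OF invertible_matrix_inv[OF C_inv] this] show ?thesis
      using Suc by simp
  qed
qed

section \<open>The conjugated operator\<close>

definition conj_coeff :: "nat \<Rightarrow> (nat \<Rightarrow> real \<Rightarrow> 'n::finite cmat) \<Rightarrow> (real \<Rightarrow> 'n cmat) \<Rightarrow> nat \<Rightarrow> real \<Rightarrow> 'n cmat"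
  where "conj_coeff s G F0 k x =
    (\<Sum>i\<le>s. real (i choose k) *\<^sub>R (vderivs (i - k) F0 x ** G i x ** matrix_inv (F0 x)))"

lemma tilde_op_eq_dop_conj_coeff:
  assumes S: "open S" and F0: "smooth_on S F0" and R: "smooth_on S R" and x: "x \<in> S"
  shows "tilde_op s G F0 R x = dop s (conj_coeff s G F0) R x"
proof -
  define iF where "iF = matrix_inv (F0 x)"
  have Leibniz: "vderivs i (\<lambda>y. R y ** F0 y) x ** G i x ** iF
      = (\<Sum>k\<le>s. vderivs k R x ** (real (i choose k) *\<^sub>R (vderivs (i - k) F0 x ** G i x ** iF)))"
    if "i \<le> s" for i
  proof -
    have "vderivs i (\<lambda>y. R y ** F0 y) x
        = (\<Sum>k\<le>i. real (i choose k) *\<^sub>R (vderivs k R x ** vderivs (i - k) F0 x))"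
      by (rule vderivs_mult_Leibniz[OF S R F0 x])
    also have "\<dots> = (\<Sum>k\<le>s. real (i choose k) *\<^sub>R (vderivs k R x ** vderivs (i - k) F0 x))"
      using that by (intro sum.mono_neutral_left) (auto simp: binomial_eq_0)
    finally show ?thesis
      by (simp add: matrix_mult_sum_left matrix_mult_scaleR_left matrix_mult_scaleR_right
          matrix_mul_assoc)
  qed
  have "tilde_op s G F0 R x = (\<Sum>i\<le>s. vderivs i (\<lambda>y. R y ** F0 y) x ** G i x ** iF)"
    unfolding tilde_op_def dop_def iF_def by (simp add: matrix_mult_sum_left)
  also have "\<dots> = (\<Sum>i\<le>s. \<Sum>k\<le>s. vderivs k R x ** (real (i choose k) *\<^sub>R (vderivs (i - k) F0 x ** G i x ** iF)))"
    using Leibniz by simp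
  also have "\<dots> = (\<Sum>k\<le>s. \<Sum>i\<le>s. vderivs k R x ** (real (i choose k) *\<^sub>R (vderivs (i - k) F0 x ** G i x ** iF)))"
    by (rule sum.swap)
  also have "\<dots> = dop s (conj_coeff s G F0) R x"
    unfolding dop_def conj_coeff_def iF_def by (simp add: matrix_mult_sum_right)
  finally show ?thesis .
qed

lemma tilde_op_eigen:
  assumes S: "open S" and x: "x \<in> S" "invertible (F0 x)"
    and factor: "\<And>y. y \<in> S \<Longrightarrow> F y = P y ** F0 y"
    and eigen: "dop s G F x = \<Lambda> ** F x"
  shows "tilde_op s G F0 P x = \<Lambda> ** P x"
proof -
  have "dop s G (\<lambda>y. P y ** F0 y) x = dop s G F x"
    unfolding dop_def using vderivs_cong_open[OF S _ x(1), of "\<lambda>y. P y ** F0 y" F] factor by simp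
  then show ?thesis
    using eigen factor[OF x(1)] matrix_inv_right[OF x(2)]
    unfolding tilde_op_def by (simp add: matrix_mul_assoc[symmetric])
qed

lemma dop_mpoly_le:
  assumes "mpoly_le k P" "k \<le> s"
  shows "dop s G P x = (\<Sum>i\<le>k. vderivs i P x ** G i x)"
  unfolding dop_def using assms
  by (intro sum.mono_neutral_right) (auto simp: vderivs_mpoly_le_eq_0)

lemma mpoly_le_dop:
  assumes P: "mpoly_le k P" and G: "\<And>j. j \<le> s \<Longrightarrow> mpoly_le j (G j)"
  shows "mpoly_le (k + s) (dop s G P)"
  unfolding dop_def
proof (rule mpoly_le_sum)
  fix i assume "i \<in> {..s}"
  then have "mpoly_le (k - i + i) (\<lambda>x. vderivs i P x ** G i x)"
    using mpoly_le_mult[OF mpoly_le_vderivs[OF P] G] by simp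
  then show "mpoly_le (k + s) (\<lambda>x. vderivs i P x ** G i x)"
    by (rule mpoly_le_mono) (use \<open>i \<in> {..s}\<close> in auto)
qed simp

lemma eigen_coeffs_mpoly_le:
  fixes H :: "nat \<Rightarrow> real \<Rightarrow> 'n::finite cmat"
  assumes deg: "\<And>k. mpoly_deg k (P k)"
    and eigen: "\<And>k x. k \<le> s \<Longrightarrow> x \<in> X \<Longrightarrow> dop s H (P k) x = \<Lambda> k ** P k x"
  shows "k \<le> s \<Longrightarrow> \<exists>g. mpoly_le k g \<and> (\<forall>x\<in>X. H k x = g x)"
proof (induction k rule: less_induct)
  case (less k)
  then obtain gs where gs: "\<And>i. i < k \<Longrightarrow> mpoly_le i (gs i) \<and> (\<forall>x\<in>X. H i x = gs i x)"
    by (metis less_imp_le_nat order.strict_trans2)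
  obtain M where M: "invertible M" "vderivs k (P k) = (\<lambda>x. M)"
    using vderivs_mpoly_deg_top[OF deg] by blast
  have P: "mpoly_le k (P k)" using mpoly_deg_imp_mpoly_le[OF deg] .
  define lower where "lower x = (\<Sum>i<k. vderivs i (P k) x ** gs i x)" for x
  have "mpoly_le (k - i + i) (\<lambda>x. vderivs i (P k) x ** gs i x)" if "i < k" for i
    using mpoly_le_mult[OF mpoly_le_vderivs[OF P] conjunct1[OF gs[OF that]]] .
  then have "mpoly_le k lower"
    unfolding lower_def by (intro mpoly_le_sum) auto
  then have g_poly: "mpoly_le k (\<lambda>x. matrix_inv M ** (\<Lambda> k ** P k x - lower x))"
    by (intro mpoly_le_lmult mpoly_le_diff P)
  have "H k x = matrix_inv M ** (\<Lambda> k ** P k x - lower x)" if x: "x \<in> X" for x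
  proof -
    have "\<Lambda> k ** P k x = (\<Sum>i\<le>k. vderivs i (P k) x ** H i x)"
      using eigen[OF less.prems x] dop_mpoly_le[OF P less.prems] by simp
    also have "\<dots> = M ** H k x + lower x"
      using gs x M(2) by (simp add: lower_def lessThan_Suc_atMost[symmetric])
    finally have "M ** H k x = \<Lambda> k ** P k x - lower x"
      by (simp add: algebra_simps)
    then show ?thesis
      using matrix_inv_left[OF M(1)] by (metis matrix_mul_assoc matrix_mul_lid)
  qed
  with g_poly show ?case by blast
qed

lemma tilde_op_polynomial_coeffs:
  assumes S: "open S" and F0: "smooth_on S F0" and X: "X \<subseteq> S"
    and deg: "\<And>k. mpoly_deg k (P k)"
    and eigen: "\<And>k x. x \<in> X \<Longrightarrow> tilde_op s G F0 (P k) x = \<Lambda> k ** P k x"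
  obtains Gt where "\<And>k. k \<le> s \<Longrightarrow> mpoly_le k (Gt k)"
    and "\<And>R x. smooth_on S R \<Longrightarrow> x \<in> X \<Longrightarrow> tilde_op s G F0 R x = dop s Gt R x"
proof -
  have "dop s (conj_coeff s G F0) (P k) x = \<Lambda> k ** P k x" if "x \<in> X" for k x
    using eigen[OF that] tilde_op_eq_dop_conj_coeff[OF S F0 smooth_on_mpoly_le[OF mpoly_deg_imp_mpoly_le[OF deg]]]
      X that by auto
  then have "\<forall>k. \<exists>g. k \<le> s \<longrightarrow> mpoly_le k g \<and> (\<forall>x\<in>X. conj_coeff s G F0 k x = g x)"
    using eigen_coeffs_mpoly_le[OF deg] by blast
  then obtain Gt where Gt: "\<And>k. k \<le> s \<Longrightarrow> mpoly_le k (Gt k) \<and> (\<forall>x\<in>X. conj_coeff s G F0 k x = Gt k x)"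
    by metis
  have "tilde_op s G F0 R x = dop s Gt R x" if "smooth_on S R" "x \<in> X" for R x
    using tilde_op_eq_dop_conj_coeff[OF S F0 that(1)] X that(2) Gt
    unfolding dop_def by (auto intro!: sum.cong)
  with Gt that show ?thesis by blast
qed

lemma dop_eigen_on_closure:
  assumes P: "mpoly_le k P" and G: "\<And>j. j \<le> s \<Longrightarrow> mpoly_le j (G j)"
    and eigen: "\<And>y. y \<in> X \<Longrightarrow> dop s G P y = \<Lambda> ** P y" and x: "x \<in> closure X"
  shows "dop s G P x = \<Lambda> ** P x"
proof -
  have "mpoly_le (k + s) (\<lambda>y. dop s G P y - \<Lambda> ** P y)"
    using mpoly_le_dop[OF P G] mpoly_le_mono[OF mpoly_le_lmult[OF P]]
    by (intro mpoly_le_diff) auto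
  then have "continuous_on (closure X) (\<lambda>y. dop s G P y - \<Lambda> ** P y)"
    using continuous_on_mpoly_le continuous_on_subset by blast
  with eigen x show ?thesis
    using continuous_constant_on_closure[of X "\<lambda>y. dop s G P y - \<Lambda> ** P y" 0] by simp
qed

theorem corollary2p2:
  fixes S :: "real set"
    and W :: "real \<Rightarrow> 'n::finite cmat"
    and F :: "nat \<Rightarrow> real \<Rightarrow> 'n cmat"
    and A B C :: "nat \<Rightarrow> 'n cmat"
    and s :: nat
    and G :: "nat \<Rightarrow> real \<Rightarrow> 'n cmat"
    and \<Lambda> :: "nat \<Rightarrow> 'n cmat"
  assumes S_open: "open S" and S_interval: "is_interval S" and S_ne: "S \<noteq> {}"
    and W_weight: "weight_matrix S W"
    and F_mof: "mof_seq S W F"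
    and rec: "\<And>n x. x \<in> S \<Longrightarrow>
        x *\<^sub>R F n x = A n ** F (n - 1) x + B n ** F n x + C n ** F (Suc n) x"
    and A0: "A 0 = 0"
    and C_inv: "\<And>n. invertible (C n)"
    and F0_smooth: "smooth_on S (F 0)"
    and eigen: "\<And>n x. x \<in> S \<Longrightarrow> dop s G (F n) x = \<Lambda> n ** F n x"
  shows "(\<exists>Q. (\<forall>n. \<exists>k. mpoly_le k (Q n)) \<and> (\<forall>n. \<forall>x\<in>S. F n x = Q n x ** F 0 x))
       \<and> (\<forall>Q. (\<forall>n. \<exists>k. mpoly_le k (Q n)) \<and> (\<forall>n. \<forall>x\<in>S. F n x = Q n x ** F 0 x) \<longrightarrow>
           (\<forall>n. \<forall>x\<in>S. invertible (F 0 x) \<longrightarrow> tilde_op s G (F 0) (Q n) x = \<Lambda> n ** Q n x)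
         \<and> weight_matrix S (\<lambda>x. F 0 x ** W x ** mat_adj (F 0 x))
         \<and> (\<exists>Gt. (\<forall>R. smooth_on S R \<longrightarrow>
                    (\<forall>x\<in>S. invertible (F 0 x) \<longrightarrow> tilde_op s G (F 0) R x = dop s Gt R x))
                \<and> (\<forall>n. \<forall>x\<in>S. dop s Gt (Q n) x = \<Lambda> n ** Q n x)
                \<and> in_DW S (\<lambda>x. F 0 x ** W x ** mat_adj (F 0 x)) s Gt
                \<and> hypergeometric S s Gt))"
proof -
  define X where "X = {x \<in> S. invertible (F 0 x)}"
  define Q0 where "Q0 = rec_poly A B C"
  have F0_inv: "AE x in lborel. x \<in> S \<longrightarrow> det (F 0 x) \<noteq> 0"
    using F_mof unfolding mof_seq_def by blast
  have S_closure: "S \<subseteq> closure X"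
    using open_subset_closure_AE[OF S_open F0_inv] unfolding X_def invertible_det_nz .
  have Q0_deg: "\<And>n. mpoly_deg n (Q0 n)"
    unfolding Q0_def using mpoly_deg_rec_poly C_inv by blast
  have Q0_factor: "\<And>n x. x \<in> S \<Longrightarrow> F n x = Q0 n x ** F 0 x"
    unfolding Q0_def using rec_poly_factor[OF rec C_inv] by blast
  have tilde_eigen: "tilde_op s G (F 0) P x = \<Lambda> n ** P x"
    if factor: "\<forall>y\<in>S. F n y = P y ** F 0 y" and x: "x \<in> X" for n P x
  proof (rule tilde_op_eigen[OF S_open])
    show xS: "x \<in> S" and "invertible (F 0 x)" using x unfolding X_def by auto
    from xS show "dop s G (F n) x = \<Lambda> n ** F n x" by (rule eigen)
  qed (use factor in blast)
  obtain Gt where Gt_deg: "\<And>k. k \<le> s \<Longrightarrow> mpoly_le k (Gt k)"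
    and Gt_tilde: "\<And>R x. smooth_on S R \<Longrightarrow> x \<in> X \<Longrightarrow> tilde_op s G (F 0) R x = dop s Gt R x"
  proof (rule tilde_op_polynomial_coeffs[OF S_open F0_smooth _ Q0_deg])
    show "X \<subseteq> S" unfolding X_def by blast
    show "tilde_op s G (F 0) (Q0 k) x = \<Lambda> k ** Q0 k x" if "x \<in> X" for k x
      using tilde_eigen[OF _ that] Q0_factor by blast
  qed (rule that)
  have Gt_eigen: "dop s Gt P x = \<Lambda> n ** P x"
    if P: "mpoly_le k P" "\<forall>y\<in>S. F n y = P y ** F 0 y" and x: "x \<in> S" for k n P x
  proof (rule dop_eigen_on_closure[OF P(1) Gt_deg])
    show "dop s Gt P y = \<Lambda> n ** P y" if "y \<in> X" for y
      using Gt_tilde[OF smooth_on_mpoly_le[OF P(1)] that] tilde_eigen[OF P(2) that] by simp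
    show "x \<in> closure X" using S_closure x by blast
  qed
  have W': "weight_matrix S (\<lambda>x. F 0 x ** W x ** mat_adj (F 0 x))"
    using weight_matrix_congruence[OF W_weight F0_inv] F_mof unfolding mof_seq_def by blast
  have "mop_seq S (\<lambda>x. F 0 x ** W x ** mat_adj (F 0 x)) Q0"
    using mop_seq_of_factorization[OF _ F_mof Q0_deg Q0_factor] S_open by simp
  then have DW: "in_DW S (\<lambda>x. F 0 x ** W x ** mat_adj (F 0 x)) s Gt"
    unfolding in_DW_def using Gt_eigen[OF mpoly_deg_imp_mpoly_le[OF Q0_deg] ballI[OF Q0_factor]] by blast
  have hyp: "hypergeometric S s Gt"
    using Gt_deg unfolding hypergeometric_def mpoly_le_def by blast
  show ?thesis
    using Q0_deg Q0_factor mpoly_deg_imp_mpoly_le tilde_eigen Gt_tilde Gt_eigen W' DW hyp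
    unfolding X_def by (intro conjI allI impI exI[of _ Gt] exI[of _ Q0]) blast+
qed

end
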